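(* Let $q$ be a prime power, $\ell,\mu\ge1$, $\mathbf{w}\in\mathcal{W}(w,\ell,\mu)$ and let $u$ be an integer with $0\le u\le w$. Let $\mathbf{u}^*$ be any output of the following procedure $\mathrm{ucomp}_\mu(\mathbf{w},u)$: set $\mathbf{u}\leftarrow\mathbf{w}$ and repeat $w-u$ times: let $J_1=\{i:u_i>0\}$, $J_2=\{i\in J_1: w_i=\min_{j\in J_1}w_j\}$, $J_3=\{i\in J_2:u_i=\max_{j\in J_2}u_j\}$, choose any $h\in J_3$ and set $u_h\leftarrow u_h-1$; output $\mathbf{u}$. Then $\mathbf{u}^*\in\mathcal{W}(u,\ell,\mu)$ and $$\varphi'(\mathbf{u}^*,\mathbf{w})=\max_{\mathbf{u}\in\mathcal{W}(u,\ell,\mu)}\varphi'(\mathbf{u},\mathbf{w}),\qquad\text{where }\ \varphi'(\mathbf{u},\mathbf{w})\coloneqq\prod_{i=1}^{\ell}\Phi_\mu(u_i\subseteq w_i).$$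
   Context: Gaussian binomial: $\begin{bmatrix}a\\ b\end{bmatrix}_q=\prod_{i=0}^{b-1}\frac{q^{a-i}-1}{q^{b-i}-1}$. $\mathcal{W}(w,\ell,\mu)\coloneqq\{\mathbf{w}\in\{0,\dots,\mu\}^{\ell}:\sum_i w_i=w\}$. For integers $0\le a,b\le\mu$, $\Phi_\mu(a\subseteq b)\coloneqq\begin{bmatrix}b\\ a\end{bmatrix}_q/\begin{bmatrix}\mu\\ a\end{bmatrix}_q$ if $a\le b$ and $0$ if $a>b$ (the probability that a uniformly random $a$-dimensional subspace of $\mathbb{F}_q^\mu$ lies in a fixed $b$-dimensional subspace). *)

theory Defs
  imports Complex_Main "HOL-Computational_Algebra.Primes"
begin

definition gauss_binom :: "real \<Rightarrow> nat \<Rightarrow> nat \<Rightarrow> real" where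
  "gauss_binom q a b = (\<Prod>i<b. (q ^ (a - i) - 1) / (q ^ (b - i) - 1))"

definition Phi :: "real \<Rightarrow> nat \<Rightarrow> nat \<Rightarrow> nat \<Rightarrow> real" where
  "Phi q \<mu> a b = (if a \<le> b then gauss_binom q b a / gauss_binom q \<mu> a else 0)"

text \<open>Vectors of length l are functions nat => nat, zero outside {..<l}.\<close>
definition Wset :: "nat \<Rightarrow> nat \<Rightarrow> nat \<Rightarrow> (nat \<Rightarrow> nat) set" where
  "Wset w l \<mu> = {v. (\<forall>i<l. v i \<le> \<mu>) \<and> (\<forall>i\<ge>l. v i = 0) \<and> (\<Sum>i<l. v i) = w}"

definition phi' :: "real \<Rightarrow> nat \<Rightarrow> nat \<Rightarrow> (nat \<Rightarrow> nat) \<Rightarrow> (nat \<Rightarrow> nat) \<Rightarrow> real" where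
  "phi' q \<mu> l u wv = (\<Prod>i<l. Phi q \<mu> (u i) (wv i))"

definition ucomp_step :: "nat \<Rightarrow> (nat \<Rightarrow> nat) \<Rightarrow> (nat \<Rightarrow> nat) \<Rightarrow> (nat \<Rightarrow> nat) \<Rightarrow> bool" where
  "ucomp_step l wv u u' \<longleftrightarrow>
     (let J1 = {i. i < l \<and> u i > 0};
          J2 = {i \<in> J1. wv i = Min (wv ` J1)};
          J3 = {i \<in> J2. u i = Max (u ` J2)}
      in \<exists>h \<in> J3. u' = u(h := u h - 1))"

definition ucomp_output :: "nat \<Rightarrow> (nat \<Rightarrow> nat) \<Rightarrow> nat \<Rightarrow> nat \<Rightarrow> (nat \<Rightarrow> nat) \<Rightarrow> bool" where
  "ucomp_output l wv w u u' \<longleftrightarrow> (ucomp_step l wv ^^ (w - u)) wv u'"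

end

theory Submission
  imports Defs
begin

text \<open>
  For \<open>a \<le> b\<close>, \<open>\<Phi>(a \<subseteq> b)\<close> is the product of the marginal factors
  \<open>(Q^(b-i) - 1) / (Q^(\<mu>-i) - 1)\<close>, \<open>i < a\<close>. These factors decrease in \<open>i\<close>, and for
  \<open>Q \<ge> 2\<close> every factor at a smaller \<open>b\<close> lies below every factor at a larger \<open>b\<close>.
  The greedy procedure removes units where the marginal factor is smallest, and it maintains an
  exchange condition: moving one unit of the output into a coordinate with room can only gain a
  factor that is at most the one lost. Hence, starting from any competitor of the same weight,
  repeatedly moving a unit towards the greedy output never decreases \<open>\<phi>'\<close>.
\<close>

lemma divide_le_divide_cross:
  fixes a b c d :: real
  assumes "0 < b" "0 < d" "a * d \<le> c * b"
  shows "a / b \<le> c / d"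
  using assms by (simp add: divide_le_eq le_divide_eq mult.commute)

definition Phi_ratio :: "real \<Rightarrow> nat \<Rightarrow> nat \<Rightarrow> nat \<Rightarrow> real" where
  "Phi_ratio Q \<mu> a b = (Q ^ (b - a) - 1) / (Q ^ (\<mu> - a) - 1)"

lemma Phi_eq_prod_Phi_ratio:
  assumes "Q > 1" "a \<le> b"
  shows "Phi Q \<mu> a b = (\<Prod>i<a. Phi_ratio Q \<mu> i b)"
proof -
  have "(\<Prod>i<a. Phi_ratio Q \<mu> i b) =
        (\<Prod>i<a. ((Q ^ (b - i) - 1) / (Q ^ (a - i) - 1)) / ((Q ^ (\<mu> - i) - 1) / (Q ^ (a - i) - 1)))"
  proof (rule prod.cong)
    fix i assume "i \<in> {..<a}"
    then have "Q ^ (a - i) > 1" using assms(1) by (intro one_less_power) auto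
    then show "Phi_ratio Q \<mu> i b =
        ((Q ^ (b - i) - 1) / (Q ^ (a - i) - 1)) / ((Q ^ (\<mu> - i) - 1) / (Q ^ (a - i) - 1))"
      unfolding Phi_ratio_def by simp
  qed simp
  also have "\<dots> = gauss_binom Q b a / gauss_binom Q \<mu> a"
    unfolding gauss_binom_def by (rule prod_dividef)
  finally have "(\<Prod>i<a. Phi_ratio Q \<mu> i b) = gauss_binom Q b a / gauss_binom Q \<mu> a" .
  then show ?thesis using assms(2) by (simp add: Phi_def)
qed

lemma Phi_Suc:
  assumes "Q > 1" "a < b"
  shows "Phi Q \<mu> (Suc a) b = Phi Q \<mu> a b * Phi_ratio Q \<mu> a b"
  using assms by (simp add: Phi_eq_prod_Phi_ratio)

lemma Phi_ratio_nonneg: "Q \<ge> 1 \<Longrightarrow> Phi_ratio Q \<mu> a b \<ge> 0"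
  by (simp add: Phi_ratio_def one_le_power)

lemma Phi_nonneg:
  assumes "Q > 1"
  shows "Phi Q \<mu> a b \<ge> 0"
proof (cases "a \<le> b")
  case True
  with assms show ?thesis by (simp add: Phi_eq_prod_Phi_ratio prod_nonneg Phi_ratio_nonneg)
qed (simp add: Phi_def)

lemma Phi_ratio_eq:
  assumes "a \<le> b" "b \<le> \<mu>"
  shows "Phi_ratio Q \<mu> a b = (Q ^ (b - a) - 1) / (Q ^ (b - a) * Q ^ (\<mu> - b) - 1)"
proof -
  have "\<mu> - a = (b - a) + (\<mu> - b)" using assms by simp
  then show ?thesis unfolding Phi_ratio_def by (simp only: power_add)
qed

lemma Phi_ratio_antimono:
  assumes "Q > 1" "a \<le> a'" "a' < b" "b \<le> \<mu>"
  shows "Phi_ratio Q \<mu> a' b \<le> Phi_ratio Q \<mu> a b"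
proof -
  define x y K where "x = Q ^ (b - a')" and "y = Q ^ (b - a)" and "K = Q ^ (\<mu> - b)"
  have "1 < x" "x \<le> y" "1 \<le> K"
    using assms by (auto simp: x_def y_def K_def one_less_power one_le_power power_increasing)
  moreover have "(x - 1) * (y * K - 1) \<le> (y - 1) * (x * K - 1)"
  proof -
    have "(y - x) * (K - 1) \<ge> 0" using \<open>x \<le> y\<close> \<open>1 \<le> K\<close> by simp
    then show ?thesis by (simp add: algebra_simps)
  qed
  moreover have "1 < x * K" "1 < y * K"
  proof -
    have "x \<le> x * K" "y \<le> y * K"
      using \<open>1 < x\<close> \<open>x \<le> y\<close> \<open>1 \<le> K\<close> by (simp_all add: mult_le_cancel_left1)
    then show "1 < x * K" "1 < y * K" using \<open>1 < x\<close> \<open>x \<le> y\<close> by linarith+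
  qed
  ultimately have "(x - 1) / (x * K - 1) \<le> (y - 1) / (y * K - 1)"
    by (intro divide_le_divide_cross) auto
  then show ?thesis using assms by (simp add: Phi_ratio_eq x_def y_def K_def)
qed

lemma Phi_ratio_le_inverse_power:
  assumes "Q > 1" "a < b" "b \<le> \<mu>"
  shows "Phi_ratio Q \<mu> a b \<le> 1 / Q ^ (\<mu> - b)"
proof -
  define x K where "x = Q ^ (b - a)" and "K = Q ^ (\<mu> - b)"
  have "1 < x" "1 \<le> K"
    using assms by (auto simp: x_def K_def one_less_power one_le_power)
  moreover have "x \<le> x * K" using \<open>1 \<le> K\<close> \<open>1 < x\<close> by (simp add: mult_le_cancel_left1)
  ultimately have "1 < x * K" by linarith
  then have "(x - 1) / (x * K - 1) \<le> 1 / K"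
    using \<open>1 \<le> K\<close> by (intro divide_le_divide_cross) (auto simp: algebra_simps)
  then show ?thesis using assms by (simp add: Phi_ratio_eq x_def K_def)
qed

lemma inverse_power_le_Phi_ratio:
  assumes "Q \<ge> 2" "a < b" "b \<le> \<mu>"
  shows "1 / Q ^ (\<mu> - b + 1) \<le> Phi_ratio Q \<mu> a b"
proof -
  define x K where "x = Q ^ (b - a)" and "K = Q ^ (\<mu> - b)"
  have "Q \<le> x" "1 \<le> K"
    using assms power_increasing[of 1 "b - a" Q] by (auto simp: x_def K_def one_le_power)
  then have "Q * K * (Q - 1) \<le> x * K * (Q - 1)" "0 \<le> Q * K * (Q - 2)"
    using assms by (auto intro!: mult_right_mono)
  then have "x * K - 1 \<le> (x - 1) * (K * Q)" by (simp add: algebra_simps)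
  moreover have "1 < x * K"
  proof -
    have "x \<le> x * K" using \<open>Q \<le> x\<close> \<open>1 \<le> K\<close> assms by (simp add: mult_le_cancel_left1)
    then show ?thesis using \<open>Q \<le> x\<close> assms by linarith
  qed
  moreover have "0 < K * Q" using \<open>1 \<le> K\<close> assms by simp
  ultimately have "1 / (K * Q) \<le> (x - 1) / (x * K - 1)"
    by (intro divide_le_divide_cross) auto
  then show ?thesis using assms by (simp add: Phi_ratio_eq x_def K_def mult.commute)
qed

lemma Phi_ratio_le_of_less:
  assumes "Q \<ge> 2" "a < b" "b < b'" "a' < b'" "b' \<le> \<mu>"
  shows "Phi_ratio Q \<mu> a b \<le> Phi_ratio Q \<mu> a' b'"
proof -
  have "Phi_ratio Q \<mu> a b \<le> 1 / Q ^ (\<mu> - b)"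
    using assms by (intro Phi_ratio_le_inverse_power) auto
  also have "\<dots> \<le> 1 / Q ^ (\<mu> - b' + 1)"
    using assms by (intro divide_left_mono power_increasing) auto
  also have "\<dots> \<le> Phi_ratio Q \<mu> a' b'"
    using assms by (intro inverse_power_le_Phi_ratio) auto
  finally show ?thesis .
qed

text \<open>The last conjunct is the exchange condition: a unit of \<open>u\<close> at \<open>j\<close> is worth at least
  as much as a new unit at any coordinate \<open>i\<close> that still has room.\<close>

definition ucomp_invariant :: "nat \<Rightarrow> (nat \<Rightarrow> nat) \<Rightarrow> (nat \<Rightarrow> nat) \<Rightarrow> bool" where
  "ucomp_invariant l wv u \<longleftrightarrow> (\<forall>i. u i \<le> wv i) \<and> (\<forall>i\<ge>l. u i = 0) \<and>
     (\<forall>i j. u i < wv i \<longrightarrow> 0 < u j \<longrightarrow> wv i < wv j \<or> wv i = wv j \<and> u j \<le> u i + 1)"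

lemma ucomp_stepE:
  assumes "ucomp_step l wv u u'"
  obtains h where "h < l" "0 < u h" "u' = u(h := u h - 1)"
    "\<And>j. j < l \<Longrightarrow> 0 < u j \<Longrightarrow> wv h \<le> wv j"
    "\<And>j. j < l \<Longrightarrow> 0 < u j \<Longrightarrow> wv j = wv h \<Longrightarrow> u j \<le> u h"
proof -
  define J1 where "J1 = {i. i < l \<and> u i > 0}"
  define J2 where "J2 = {i \<in> J1. wv i = Min (wv ` J1)}"
  define J3 where "J3 = {i \<in> J2. u i = Max (u ` J2)}"
  have "finite J1" "finite J2" by (auto simp: J1_def J2_def)
  from assms obtain h where h: "h \<in> J3" "u' = u(h := u h - 1)"
    unfolding ucomp_step_def Let_def J1_def[symmetric] J2_def[symmetric] J3_def[symmetric] by blast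
  show ?thesis
  proof (rule that)
    show "h < l" "0 < u h" "u' = u(h := u h - 1)" using h by (auto simp: J1_def J2_def J3_def)
  next
    fix j assume "j < l" "0 < u j"
    then have "j \<in> J1" by (simp add: J1_def)
    with h \<open>finite J1\<close> show "wv h \<le> wv j" by (auto simp: J2_def J3_def)
    assume "wv j = wv h"
    with \<open>j \<in> J1\<close> h have "j \<in> J2" by (auto simp: J2_def J3_def)
    with h \<open>finite J2\<close> show "u j \<le> u h" by (auto simp: J3_def)
  qed
qed

lemma sum_fun_upd:
  fixes f :: "'a \<Rightarrow> 'b::comm_monoid_add"
  assumes "finite A" "i \<in> A"
  shows "sum (f(i := x)) A = x + sum f (A - {i})"
  using assms by (simp add: sum.remove)

lemma ucomp_step_invariant:
  assumes "ucomp_invariant l wv u" "ucomp_step l wv u u'"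
  shows "ucomp_invariant l wv u' \<and> (\<Sum>i<l. u' i) = (\<Sum>i<l. u i) - 1"
proof -
  obtain h where h: "h < l" "0 < u h" "u' = u(h := u h - 1)"
    and hmin: "\<And>j. j < l \<Longrightarrow> 0 < u j \<Longrightarrow> wv h \<le> wv j"
    and hmax: "\<And>j. j < l \<Longrightarrow> 0 < u j \<Longrightarrow> wv j = wv h \<Longrightarrow> u j \<le> u h"
    by (rule ucomp_stepE[OF assms(2)]) blast
  have le: "\<forall>i. u i \<le> wv i" and supp: "\<forall>i\<ge>l. u i = 0"
    and exch: "\<And>i j. u i < wv i \<Longrightarrow> 0 < u j \<Longrightarrow> wv i < wv j \<or> wv i = wv j \<and> u j \<le> u i + 1"
    using assms(1) unfolding ucomp_invariant_def by blast+
  have "wv i < wv j \<or> wv i = wv j \<and> u' j \<le> u' i + 1" if "u' i < wv i" "0 < u' j" for i j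
  proof (cases "i = h")
    case True
    show ?thesis
    proof (cases "j = h")
      case False
      with that h(3) have "0 < u j" "u' j = u j" by auto
      moreover from \<open>0 < u j\<close> supp have "j < l" by (metis less_irrefl not_less)
      ultimately show ?thesis using True h hmin[of j] hmax[of j] by auto
    qed (use True in simp)
  next
    case False
    with that h(3) exch[of i j] show ?thesis by (cases "j = h") auto
  qed
  moreover have "u' i \<le> wv i" "l \<le> i \<Longrightarrow> u' i = 0" for i
    using le supp h by (auto intro: le_trans[OF diff_le_self])
  moreover have "(\<Sum>i<l. u' i) = (\<Sum>i<l. u i) - 1"
  proof -
    have "(\<Sum>i<l. u' i) = (u h - 1) + sum u ({..<l} - {h})"
      unfolding h(3) using h(1) by (intro sum_fun_upd) auto
    also have "\<dots> = (\<Sum>i<l. u i) - 1"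
      using h(1,2) sum.remove[of "{..<l}" h u] by simp
    finally show ?thesis .
  qed
  ultimately show ?thesis unfolding ucomp_invariant_def by blast
qed

lemma ucomp_iterate_invariant:
  assumes "(ucomp_step l wv ^^ k) wv u" "\<forall>i\<ge>l. wv i = 0"
  shows "ucomp_invariant l wv u \<and> (\<Sum>i<l. u i) = (\<Sum>i<l. wv i) - k"
  using assms(1)
proof (induction k arbitrary: u)
  case 0
  then show ?case using assms(2) by (auto simp: ucomp_invariant_def)
next
  case (Suc k)
  then obtain u0 where "(ucomp_step l wv ^^ k) wv u0" "ucomp_step l wv u0 u"
    by (auto elim: relpowp_Suc_E)
  with Suc.IH ucomp_step_invariant show ?case by fastforce
qed

lemma prod_remove_two:
  fixes f :: "'a \<Rightarrow> 'b::comm_monoid_mult"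
  assumes "finite A" "i \<in> A" "j \<in> A" "i \<noteq> j"
  shows "prod f A = f i * f j * prod f (A - {i, j})"
proof -
  have "prod f A = f i * prod f (A - {i})" using assms by (intro prod.remove)
  also have "prod f (A - {i}) = f j * prod f (A - {i} - {j})" using assms by (intro prod.remove) auto
  also have "A - {i} - {j} = A - {i, j}" by auto
  finally show ?thesis by (simp only: mult.assoc)
qed

lemma sum_remove_two:
  fixes f :: "'a \<Rightarrow> 'b::comm_monoid_add"
  assumes "finite A" "i \<in> A" "j \<in> A" "i \<noteq> j"
  shows "sum f A = f i + f j + sum f (A - {i, j})"
proof -
  have "sum f A = f i + sum f (A - {i})" using assms by (intro sum.remove)
  also have "sum f (A - {i}) = f j + sum f (A - {i} - {j})" using assms by (intro sum.remove) auto
  also have "A - {i} - {j} = A - {i, j}" by auto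
  finally show ?thesis by (simp only: add.assoc)
qed

lemma sum_eq_imp_ex_less:
  fixes f g :: "'a \<Rightarrow> 'b::{ordered_cancel_comm_monoid_add, linorder}"
  assumes "finite A" "sum f A = sum g A" "i \<in> A" "f i < g i"
  shows "\<exists>j\<in>A. g j < f j"
proof (rule ccontr)
  assume "\<not> (\<exists>j\<in>A. g j < f j)"
  then have "sum f A < sum g A"
    using assms by (intro sum_strict_mono_ex1) (auto simp: not_less)
  with assms(2) show False by simp
qed

lemma phi'_nonneg: "Q > 1 \<Longrightarrow> phi' Q \<mu> l v wv \<ge> 0"
  by (simp add: phi'_def prod_nonneg Phi_nonneg)

lemma phi'_transfer_mono:
  assumes "Q > 1" "i < l" "j < l" "i \<noteq> j" "0 < v i" "v i \<le> wv i" "v j < wv j"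
    and ratio: "Phi_ratio Q \<mu> (v i - 1) (wv i) \<le> Phi_ratio Q \<mu> (v j) (wv j)"
  shows "phi' Q \<mu> l v wv \<le> phi' Q \<mu> l (v(i := v i - 1, j := v j + 1)) wv"
proof -
  define v' where "v' = v(i := v i - 1, j := v j + 1)"
  define R where "R = (\<Prod>k\<in>{..<l} - {i, j}. Phi Q \<mu> (v k) (wv k))"
  define P where "P = Phi Q \<mu> (v i - 1) (wv i) * Phi Q \<mu> (v j) (wv j) * R"
  have "(\<Prod>k\<in>{..<l} - {i, j}. Phi Q \<mu> (v' k) (wv k)) = R"
    unfolding R_def v'_def by (intro prod.cong) auto
  then have "phi' Q \<mu> l v' wv = Phi Q \<mu> (v i - 1) (wv i) * Phi Q \<mu> (Suc (v j)) (wv j) * R"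
    using assms(2-4) by (simp add: phi'_def prod_remove_two[of _ i j] v'_def)
  also have "\<dots> = P * Phi_ratio Q \<mu> (v j) (wv j)"
    using assms(1,7) by (simp add: Phi_Suc P_def ac_simps)
  finally have v': "phi' Q \<mu> l v' wv = P * Phi_ratio Q \<mu> (v j) (wv j)" .
  have "Phi Q \<mu> (v i) (wv i) = Phi Q \<mu> (v i - 1) (wv i) * Phi_ratio Q \<mu> (v i - 1) (wv i)"
    using assms(1,5,6) Phi_Suc[of Q "v i - 1" "wv i" \<mu>] by simp
  then have "phi' Q \<mu> l v wv = P * Phi_ratio Q \<mu> (v i - 1) (wv i)"
    using assms(2-4) by (simp add: phi'_def prod_remove_two[of _ i j] P_def R_def ac_simps)
  moreover have "P \<ge> 0" using assms(1) by (simp add: P_def R_def Phi_nonneg prod_nonneg)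
  ultimately show ?thesis using ratio v' by (simp add: v'_def mult_left_mono)
qed

lemma phi'_eq_0: "i < l \<Longrightarrow> wv i < v i \<Longrightarrow> phi' Q \<mu> l v wv = 0"
  unfolding phi'_def by (intro prod_zero bexI[of _ i]) (auto simp: Phi_def)

lemma ucomp_invariant_Phi_ratio_le:
  assumes "Q \<ge> 2" "ucomp_invariant l wv u" "u i < wv i" "0 < u j" "wv j \<le> \<mu>"
  shows "Phi_ratio Q \<mu> (u i) (wv i) \<le> Phi_ratio Q \<mu> (u j - 1) (wv j)"
proof -
  have "u j \<le> wv j" and "wv i < wv j \<or> wv i = wv j \<and> u j \<le> u i + 1"
    using assms(2-4) unfolding ucomp_invariant_def by blast+
  then show ?thesis
  proof (elim disjE conjE)
    assume "wv i < wv j"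
    then show ?thesis
      using assms \<open>u j \<le> wv j\<close> by (intro Phi_ratio_le_of_less) auto
  next
    assume "wv i = wv j" "u j \<le> u i + 1"
    then show ?thesis using assms Phi_ratio_antimono[of Q "u j - 1" "u i" "wv j" \<mu>] by auto
  qed
qed

lemma ucomp_invariant_phi'_maximal:
  assumes "Q \<ge> 2" "ucomp_invariant l wv u" "\<forall>i<l. wv i \<le> \<mu>"
    and "(\<Sum>i<l. v i) = (\<Sum>i<l. u i)"
  shows "phi' Q \<mu> l v wv \<le> phi' Q \<mu> l u wv"
  using assms(4)
proof (induction "\<Sum>k<l. v k - u k" arbitrary: v rule: less_induct)
  case less
  have u_le: "\<And>k. u k \<le> wv k" using assms(2) by (simp add: ucomp_invariant_def)
  show ?case
  proof (cases "\<exists>k<l. wv k < v k")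
    case True
    then show ?thesis using assms(1) by (auto simp: phi'_eq_0 phi'_nonneg)
  next
    case v_le: False
    show ?thesis
    proof (cases "\<exists>i<l. u i < v i")
      case False
      then have "\<forall>k<l. v k \<le> u k" using not_less by blast
      then have "v k = u k" if "k < l" for k
        using that by (intro sum_mono_inv[OF less.prems]) auto
      then show ?thesis by (simp add: phi'_def)
    next
      case True
      then obtain i where i: "i < l" "u i < v i" by blast
      obtain j where j: "j < l" "v j < u j"
        using sum_eq_imp_ex_less[OF _ less.prems[symmetric]] i by blast
      define v' where "v' = v(i := v i - 1, j := v j + 1)"
      have "i \<noteq> j" using i j by auto
      have "Phi_ratio Q \<mu> (v i - 1) (wv i) \<le> Phi_ratio Q \<mu> (u i) (wv i)"
        using assms(1,3) i v_le by (intro Phi_ratio_antimono) auto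
      also have "\<dots> \<le> Phi_ratio Q \<mu> (u j - 1) (wv j)"
        using assms i j u_le[of i] v_le by (intro ucomp_invariant_Phi_ratio_le) auto
      also have "\<dots> \<le> Phi_ratio Q \<mu> (v j) (wv j)"
        using assms(1,3) j u_le[of j] by (intro Phi_ratio_antimono) auto
      finally have "phi' Q \<mu> l v wv \<le> phi' Q \<mu> l v' wv"
        unfolding v'_def using assms(1) i j u_le[of j] v_le \<open>i \<noteq> j\<close>
        by (intro phi'_transfer_mono) auto
      also have "phi' Q \<mu> l v' wv \<le> phi' Q \<mu> l u wv"
      proof (rule less.hyps)
        show "(\<Sum>k<l. v' k - u k) < (\<Sum>k<l. v k - u k)"
          using i j unfolding v'_def by (intro sum_strict_mono_ex1) auto
        show "(\<Sum>k<l. v' k) = (\<Sum>k<l. u k)"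
          using i j \<open>i \<noteq> j\<close> less.prems
          by (simp add: v'_def sum_remove_two[of _ i j] sum_remove_two[of _ i j v])
      qed
      finally show ?thesis .
    qed
  qed
qed

lemma finite_Wset: "finite (Wset w l \<mu>)"
proof (rule finite_subset)
  show "Wset w l \<mu> \<subseteq> {f. \<forall>x. (x \<in> {..<l} \<longrightarrow> f x \<in> {..\<mu>}) \<and> (x \<notin> {..<l} \<longrightarrow> f x = 0)}"
    unfolding Wset_def by auto
  show "finite {f. \<forall>x. (x \<in> {..<l} \<longrightarrow> f x \<in> {..\<mu>}) \<and> (x \<notin> {..<l} \<longrightarrow> f x = (0::nat))}"
    by (intro finite_set_of_finite_funs) auto
qed

lemma prime_power_ge_2:
  assumes "prime p" "k \<ge> 1"
  shows "p ^ k \<ge> (2::nat)"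
  using prime_ge_2_nat[OF assms(1)] self_le_power[of p k] assms(2) by simp

theorem mainTheorem8:
  fixes q l \<mu> w u :: nat and wv us :: "nat \<Rightarrow> nat"
  assumes "\<exists>p k. prime p \<and> k \<ge> 1 \<and> q = p ^ k"
    and "l \<ge> 1" and "\<mu> \<ge> 1"
    and "wv \<in> Wset w l \<mu>"
    and "u \<le> w"
    and "ucomp_output l wv w u us"
  shows "us \<in> Wset u l \<mu> \<and>
         phi' (real q) \<mu> l us wv = Max ((\<lambda>v. phi' (real q) \<mu> l v wv) ` Wset u l \<mu>)"
proof -
  obtain p k where "prime p" "k \<ge> 1" "q = p ^ k" using assms(1) by blast
  then have "q \<ge> 2" by (simp add: prime_power_ge_2)
  then have q: "real q \<ge> 2" by simp
  have wv: "\<forall>i<l. wv i \<le> \<mu>" "\<forall>i\<ge>l. wv i = 0" "(\<Sum>i<l. wv i) = w"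
    using assms(4) unfolding Wset_def by auto
  have inv: "ucomp_invariant l wv us" and sum_us: "(\<Sum>i<l. us i) = u"
    using ucomp_iterate_invariant[OF assms(6)[unfolded ucomp_output_def] wv(2)] wv(3) assms(5)
    by auto
  have "us i \<le> \<mu>" if "i < l" for i
    using inv wv(1) that unfolding ucomp_invariant_def by (meson le_trans)
  then have us: "us \<in> Wset u l \<mu>"
    using inv sum_us unfolding ucomp_invariant_def Wset_def by blast
  have "phi' (real q) \<mu> l v wv \<le> phi' (real q) \<mu> l us wv" if "v \<in> Wset u l \<mu>" for v
    using that sum_us q inv wv(1) by (intro ucomp_invariant_phi'_maximal) (auto simp: Wset_def)
  then have "Max ((\<lambda>v. phi' (real q) \<mu> l v wv) ` Wset u l \<mu>) = phi' (real q) \<mu> l us wv"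
    using us finite_Wset by (intro Max_eqI) auto
  with us show ?thesis by simp
qed

end
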